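(* Let $\Gamma$ be a Coxeter graph of spherical type or of affine type, and let $\mathcal X\subset\Phi[\Gamma]$ be free of infinity with respect to $\hat M$, i.e. $\hat m_{\beta,\gamma}\neq\infty$ for all $\beta,\gamma\in\mathcal X$. Then $\mathcal X$ is finite, the full subgraph $\hat\Gamma_{\mathcal X}$ of $\hat\Gamma$ spanned by $\mathcal X$ is of spherical type or of affine type, and $n_{\mathrm{sph}}(A[\hat\Gamma_{\mathcal X}])\le n_{\mathrm{sph}}(A[\Gamma])$.
   Context: A Coxeter matrix on a countable set $S$ is a symmetric matrix $M=(m_{s,t})_{s,t\in S}$ with entries in $\mathbb{N}\cup\{\infty\}$ with $m_{s,s}=1$ and $m_{s,t}=m_{t,s}\ge2$ for $s\ne t$; it is encoded by a Coxeter graph $\Gamma$ with vertex set $S$. $W[\Gamma]=\langle S\mid s^2=1,\ (st)^{m_{s,t}}=1 \text{ for } m_{s,t}\ne\infty\rangle$ is the Coxeter group and $A[\Gamma]$ the Artin group. Let $V$ be the real vector space with basis $\{\alpha_s\mid s\in S\}$ and canonical symmetric bilinear form $\langle\alpha_s,\alpha_t\rangle=-2\cos(\pi/m_{s,t})$ if $m_{s,t}\neq\infty$ and $-2$ otherwise; $W[\Gamma]$ acts on $V$ by $s(v)=v-\langle v,\alpha_s\rangle\alpha_s$, and $\Phi[\Gamma]=\{w(\alpha_s)\mid w\in W[\Gamma],s\in S\}$ is the root system. Define the Coxeter matrix $\hat M=(\hat m_{\beta,\gamma})_{\beta,\gamma\in\Phi[\Gamma]}$ by $\hat m_{\beta,\beta}=1$,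 and for $\beta\neq\gamma$: $\hat m_{\beta,\gamma}=m_{s,t}$ if there exist $w\in W[\Gamma]$, $s,t\in S$ with $\beta=w(\alpha_s)$, $\gamma=w(\alpha_t)$, $m_{s,t}\neq\infty$ (independent of choices), and $\hat m_{\beta,\gamma}=\infty$ otherwise; $\hat\Gamma$ is its Coxeter graph. A finite Coxeter graph is of spherical type if its Coxeter group is finite (equivalently its canonical bilinear form is positive definite), and of affine type if its canonical bilinear form is positive semi-definite but not positive definite. For a Coxeter graph $\Gamma$ with vertex set $S$ and $X\subset S$, $\Gamma_X$ is the full subgraph spanned by $X$; the spherical dimension $n_{\mathrm{sph}}(A[\Gamma])$ is the maximum of $|X|$ over all finite $X\subset S$ with $\Gamma_X$ of spherical type. *)

theory Defs
  imports Complex_Main "HOL-Library.Extended_Nat" "HOL-Library.Countable_Set"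
begin

text \<open>A Coxeter graph is given by a vertex set S and a matrix M on S with entries in
  nat extended by infinity.  Only the values of M on S x S matter.\<close>

definition coxeter_matrix :: "'v set \<Rightarrow> ('v \<Rightarrow> 'v \<Rightarrow> enat) \<Rightarrow> bool" where
  "coxeter_matrix S M \<longleftrightarrow>
     (\<forall>s\<in>S. M s s = 1) \<and>
     (\<forall>s\<in>S. \<forall>t\<in>S. s \<noteq> t \<longrightarrow> M s t = M t s \<and> M s t \<ge> 2)"

definition bf_coeff :: "('v \<Rightarrow> 'v \<Rightarrow> enat) \<Rightarrow> 'v \<Rightarrow> 'v \<Rightarrow> real" where
  "bf_coeff M s t = (case M s t of enat n \<Rightarrow> - 2 * cos (pi / real n) | \<infinity> \<Rightarrow> - 2)"

text \<open>Vectors of V (real vector space with basis alpha_s, s in S) are represented as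
  functions 'v => real (coordinates), vanishing outside S; the form only reads S.\<close>
definition bform :: "'v set \<Rightarrow> ('v \<Rightarrow> 'v \<Rightarrow> enat) \<Rightarrow> ('v \<Rightarrow> real) \<Rightarrow> ('v \<Rightarrow> real) \<Rightarrow> real" where
  "bform S M u v = (\<Sum>s\<in>S. \<Sum>t\<in>S. u s * v t * bf_coeff M s t)"

definition simple_root :: "'v \<Rightarrow> ('v \<Rightarrow> real)" where
  "simple_root s = (\<lambda>x. if x = s then 1 else 0)"

definition refl :: "'v set \<Rightarrow> ('v \<Rightarrow> 'v \<Rightarrow> enat) \<Rightarrow> 'v \<Rightarrow> ('v \<Rightarrow> real) \<Rightarrow> ('v \<Rightarrow> real)" where
  "refl S M s v = (\<lambda>x. v x - bform S M v (simple_root s) * simple_root s x)"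

text \<open>The Coxeter group W acting on V: the group of linear maps generated by the
  reflections s (each s is an involution, so products of generators give all of W).\<close>
inductive_set weyl :: "'v set \<Rightarrow> ('v \<Rightarrow> 'v \<Rightarrow> enat) \<Rightarrow> (('v \<Rightarrow> real) \<Rightarrow> ('v \<Rightarrow> real)) set"
  for S M where
  weyl_id: "id \<in> weyl S M"
| weyl_step: "w \<in> weyl S M \<Longrightarrow> s \<in> S \<Longrightarrow> refl S M s \<circ> w \<in> weyl S M"

definition roots :: "'v set \<Rightarrow> ('v \<Rightarrow> 'v \<Rightarrow> enat) \<Rightarrow> ('v \<Rightarrow> real) set" where
  "roots S M = {w (simple_root s) | w s. w \<in> weyl S M \<and> s \<in> S}"

definition hatM :: "'v set \<Rightarrow> ('v \<Rightarrow> 'v \<Rightarrow> enat) \<Rightarrow> ('v \<Rightarrow> real) \<Rightarrow> ('v \<Rightarrow> real) \<Rightarrow> enat" where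
  "hatM S M \<beta> \<gamma> =
    (if \<beta> = \<gamma> then 1
     else if (\<exists>w s t. w \<in> weyl S M \<and> s \<in> S \<and> t \<in> S \<and> \<beta> = w (simple_root s) \<and>
                      \<gamma> = w (simple_root t) \<and> M s t \<noteq> \<infinity>)
     then (let p = (SOME p. \<exists>w. w \<in> weyl S M \<and> fst p \<in> S \<and> snd p \<in> S \<and>
                      \<beta> = w (simple_root (fst p)) \<and> \<gamma> = w (simple_root (snd p)) \<and>
                      M (fst p) (snd p) \<noteq> \<infinity>) in M (fst p) (snd p))
     else \<infinity>)"

definition spherical_type :: "'v set \<Rightarrow> ('v \<Rightarrow> 'v \<Rightarrow> enat) \<Rightarrow> bool" where
  "spherical_type S M \<longleftrightarrow> finite S \<and>
     (\<forall>x::'v \<Rightarrow> real. (\<exists>s\<in>S. x s \<noteq> 0) \<longrightarrow> bform S M x x > 0)"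

definition affine_type :: "'v set \<Rightarrow> ('v \<Rightarrow> 'v \<Rightarrow> enat) \<Rightarrow> bool" where
  "affine_type S M \<longleftrightarrow> finite S \<and>
     (\<forall>x::'v \<Rightarrow> real. bform S M x x \<ge> 0) \<and>
     \<not> (\<forall>x::'v \<Rightarrow> real. (\<exists>s\<in>S. x s \<noteq> 0) \<longrightarrow> bform S M x x > 0)"

text \<open>Spherical dimension of A[Gamma]; the full subgraph Gamma_X is (X, M restricted).\<close>
definition nsph :: "'v set \<Rightarrow> ('v \<Rightarrow> 'v \<Rightarrow> enat) \<Rightarrow> nat" where
  "nsph S M = Max {card X | X. X \<subseteq> S \<and> finite X \<and> spherical_type X M}"

end

theory Submission imports Defs "HOL-Library.Function_Algebras" begin

text \<open>The canonical form B is invariant under W, so every root has B \<beta> \<beta> = 2, and two distinct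
  roots \<beta>, \<gamma> with finite hat m are a W-translate of a pair of simple roots, whence
  B \<beta> \<gamma> = -2 cos (\<pi> / hat m) \<le> 0.  So the canonical form of hat \<Gamma> restricted to X is the
  Gram form of B on X, which is positive semidefinite; this gives the type.
  Every root pairs nontrivially with some simple root, and pairwise obtuse vectors in an
  open half-space of a positive semidefinite space are linearly independent, so X is a finite
  union of sets of at most |S| elements.
  For the spherical dimension fix an inclusion-maximal spherical T \<subseteq> S.  Every simple root
  lies in the span of the simple roots of T and the radical of B, so a vector orthogonal to
  the simple roots of T is isotropic.  Hence for a spherical Y \<subseteq> X the coordinate vectors
  (B y \<alpha>_t)_{t \<in> T}, y \<in> Y, with \<alpha>_t the simple root of t, are linearly independent,
  and |Y| \<le> |T|.\<close>

instantiation "fun" :: (type, real_vector) real_vector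
begin
definition scaleR_fun :: "real \<Rightarrow> ('a \<Rightarrow> 'b) \<Rightarrow> 'a \<Rightarrow> 'b" where
  "scaleR_fun r f = (\<lambda>x. r *\<^sub>R f x)"
instance by standard (auto simp: scaleR_fun_def fun_eq_iff plus_fun_def algebra_simps)
end

lemma scaleR_fun_apply [simp]: "(r *\<^sub>R f) x = r *\<^sub>R f x"
  by (simp add: scaleR_fun_def)

lemma sum_fun_apply: "(sum f A) x = (\<Sum>a\<in>A. f a x)"
  by (induction A rule: infinite_finite_induct) (auto simp: plus_fun_def)

lemma card_le_if_family_independent:
  fixes g :: "'b \<Rightarrow> 'c::real_vector"
  assumes Y: "finite Y" and T: "finite T" and sp: "g ` Y \<subseteq> span T"
    and indep: "\<And>c. (\<Sum>y\<in>Y. c y *\<^sub>R g y) = 0 \<Longrightarrow> \<forall>y\<in>Y. c y = 0"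
  shows "card Y \<le> card T"
proof -
  have inj: "inj_on g Y"
  proof (rule inj_onI, rule ccontr)
    fix a b assume ab: "a \<in> Y" "b \<in> Y" "g a = g b" "a \<noteq> b"
    define c where "c y = (if y = a then 1 else if y = b then -1 else 0 :: real)" for y
    have "c y *\<^sub>R g y = (if y = a then g y else 0) - (if y = b then g y else 0)" for y
      using ab(4) by (simp add: c_def)
    then have "(\<Sum>y\<in>Y. c y *\<^sub>R g y) = (\<Sum>y\<in>Y. (if y = a then g y else 0)) - (\<Sum>y\<in>Y. (if y = b then g y else 0))"
      by (simp add: sum_subtractf)
    also have "\<dots> = 0" using ab Y by simp
    finally have "c a = 0" using indep ab(1) by blast
    then show False by (simp add: c_def)
  qed
  have "independent (g ` Y)"
  proof (rule independent_if_scalars_zero)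
    fix f x assume "(\<Sum>x\<in>g ` Y. f x *\<^sub>R x) = 0" and "x \<in> g ` Y"
    moreover from this(1) have "(\<Sum>y\<in>Y. f (g y) *\<^sub>R g y) = 0" by (simp add: sum.reindex[OF inj])
    ultimately show "f x = 0" using indep[of "\<lambda>y. f (g y)"] by auto
  qed (use Y in simp)
  then have "card (g ` Y) \<le> card T" using independent_span_bound[OF T _ sp] by blast
  then show ?thesis using card_image[OF inj] by simp
qed

lemma in_span_simple_roots:
  assumes "finite A" "\<And>q. q \<notin> A \<Longrightarrow> h q = 0"
  shows "h \<in> span (simple_root ` A)"
proof -
  have "h = (\<Sum>t\<in>A. h t *\<^sub>R simple_root t)"
    using assms by (auto simp: fun_eq_iff sum_fun_apply simple_root_def if_distrib cong: if_cong)
  also have "\<dots> \<in> span (simple_root ` A)" by (intro span_sum span_scale span_base) auto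
  finally show ?thesis .
qed

lemma bform_add_left: "bform S M (u + v) w = bform S M u w + bform S M v w"
  by (simp add: bform_def algebra_simps sum.distrib)

lemma bform_add_right: "bform S M u (v + w) = bform S M u v + bform S M u w"
  by (simp add: bform_def algebra_simps sum.distrib)

lemma bform_diff_left: "bform S M (u - v) w = bform S M u w - bform S M v w"
  by (simp add: bform_def algebra_simps sum_subtractf)

lemma bform_diff_right: "bform S M u (v - w) = bform S M u v - bform S M u w"
  by (simp add: bform_def algebra_simps sum_subtractf)

lemma bform_uminus_right: "bform S M u (- v) = - bform S M u v"
  by (simp add: bform_def sum_negf)

lemma bform_scaleR_left: "bform S M (c *\<^sub>R u) v = c * bform S M u v"
  by (simp add: bform_def sum_distrib_left algebra_simps)

lemma bform_scaleR_right: "bform S M u (c *\<^sub>R v) = c * bform S M u v"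
  by (simp add: bform_def sum_distrib_left algebra_simps)

lemma linear_bform_right: "linear (bform S M u)"
  by (rule linearI) (simp_all add: bform_add_right bform_scaleR_right)

lemma bform_zero_left [simp]: "bform S M 0 u = 0"
  by (simp add: bform_def)

lemma bform_zero_right [simp]: "bform S M u 0 = 0"
  by (simp add: bform_def)

lemma bform_sum_left: "bform S M (\<Sum>i\<in>I. c i *\<^sub>R x i) u = (\<Sum>i\<in>I. c i * bform S M (x i) u)"
  by (induction I rule: infinite_finite_induct)
    (simp_all add: bform_add_left bform_scaleR_left del: plus_fun_apply zero_fun_apply scaleR_fun_apply)

lemma bform_sum_right: "bform S M u (\<Sum>i\<in>I. c i *\<^sub>R x i) = (\<Sum>i\<in>I. c i * bform S M u (x i))"
  by (induction I rule: infinite_finite_induct)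
    (simp_all add: bform_add_right bform_scaleR_right del: plus_fun_apply zero_fun_apply scaleR_fun_apply)

lemma bform_simple_root_simple_root:
  assumes "finite S" "s \<in> S" "t \<in> S"
  shows "bform S M (simple_root s) (simple_root t) = bf_coeff M s t"
proof -
  have "(\<Sum>t'\<in>S. simple_root s s' * simple_root t t' * bf_coeff M s' t') =
      (if s' = s then bf_coeff M s t else 0)" for s'
  proof -
    have "simple_root t t' * bf_coeff M s t' = (if t' = t then bf_coeff M s t else 0)" for t'
      by (simp add: simple_root_def)
    then show ?thesis using assms by (simp add: simple_root_def)
  qed
  then show ?thesis using assms by (simp add: bform_def)
qed

lemma refl_eq: "refl S M s v = v - bform S M v (simple_root s) *\<^sub>R simple_root s"
  by (simp add: refl_def fun_eq_iff)

lemma bform_restrict: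
  assumes "A \<subseteq> S" "finite S"
  shows "bform S M (\<lambda>q. if q \<in> A then x q else 0) (\<lambda>q. if q \<in> A then x q else 0) = bform A M x x"
  unfolding bform_def
  by (rule sum.mono_neutral_cong_right[OF assms(2,1)], simp,
      rule sum.mono_neutral_cong_right[OF assms(2,1)]) auto

lemma bform_nonneg_if_spherical_or_affine:
  assumes "spherical_type S M \<or> affine_type S M"
  shows "bform S M x x \<ge> 0"
proof (cases "\<exists>s\<in>S. x s \<noteq> 0")
  case True
  then show ?thesis using assms unfolding spherical_type_def affine_type_def
    by (auto simp: less_imp_le)
next
  case False
  then show ?thesis by (simp add: bform_def)
qed

lemma spherical_or_affine_if_bform_nonneg:
  assumes "finite S" "\<And>x. bform S M x x \<ge> 0"
  shows "spherical_type S M \<or> affine_type S M"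
  using assms unfolding spherical_type_def affine_type_def by blast

definition maximal_spherical :: "'v set \<Rightarrow> ('v \<Rightarrow> 'v \<Rightarrow> enat) \<Rightarrow> 'v set \<Rightarrow> bool" where
  "maximal_spherical S M T \<longleftrightarrow> T \<subseteq> S \<and> spherical_type T M \<and>
     (\<forall>s\<in>S - T. \<not> spherical_type (insert s T) M)"

lemma nsph_attained:
  assumes "finite S"
  obtains T where "maximal_spherical S M T" "card T = nsph S M"
proof -
  define D where "D = {card X | X. X \<subseteq> S \<and> finite X \<and> spherical_type X M}"
  have fin: "finite D"
    by (rule finite_subset[of _ "{..card S}"]) (auto simp: D_def intro: card_mono assms)
  have "spherical_type {} M" by (simp add: spherical_type_def)
  then have "D \<noteq> {}" unfolding D_def by blast
  with fin have "Max D \<in> D" by (rule Max_in)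
  then obtain T where T: "T \<subseteq> S" "finite T" "spherical_type T M" "card T = nsph S M"
    unfolding D_def nsph_def by auto
  have "\<not> spherical_type (insert s T) M" if "s \<in> S - T" for s
  proof
    assume "spherical_type (insert s T) M"
    then have "card (insert s T) \<in> D" using that T unfolding D_def by blast
    then have "card (insert s T) \<le> Max D" using fin by simp
    then show False using that T by (simp add: D_def nsph_def)
  qed
  then show ?thesis using T by (intro that) (auto simp: maximal_spherical_def)
qed

lemma nsph_le:
  assumes "finite S" "\<And>Y. Y \<subseteq> S \<Longrightarrow> spherical_type Y M \<Longrightarrow> card Y \<le> n"
  shows "nsph S M \<le> n"
proof -
  obtain T where T: "maximal_spherical S M T" "card T = nsph S M"
    using nsph_attained[OF assms(1)] .
  then have "card T \<le> n" using assms(2) unfolding maximal_spherical_def by blast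
  then show ?thesis using T(2) by simp
qed

locale psd_coxeter_graph =
  fixes S :: "'a set" and M :: "'a \<Rightarrow> 'a \<Rightarrow> enat"
  assumes coxeter: "coxeter_matrix S M" and finite_S: "finite S"
    and psd: "\<And>x. bform S M x x \<ge> 0"
begin

abbreviation B where "B \<equiv> bform S M"

lemma B_sym: "B u v = B v u"
proof -
  have "bf_coeff M s t = bf_coeff M t s" if "s \<in> S" "t \<in> S" for s t
    using coxeter that unfolding coxeter_matrix_def bf_coeff_def by (cases "s = t") auto
  then show ?thesis unfolding bform_def
    by (subst sum.swap) (auto intro!: sum.cong simp: mult_ac)
qed

lemma B_simple_root_self: "s \<in> S \<Longrightarrow> B (simple_root s) (simple_root s) = 2"
  using coxeter finite_S
  by (simp add: bform_simple_root_simple_root bf_coeff_def coxeter_matrix_def one_enat_def)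

lemma B_refl: assumes "s \<in> S" shows "B (refl S M s u) (refl S M s v) = B u v"
proof -
  let ?a = "simple_root s"
  have "B (refl S M s u) (refl S M s v) =
      B u v - B u ?a * B v ?a - B u ?a * B ?a v + B u ?a * B v ?a * B ?a ?a"
    unfolding refl_eq
    by (simp add: bform_diff_left bform_diff_right bform_scaleR_left bform_scaleR_right algebra_simps)
  then show ?thesis using B_simple_root_self[OF assms] B_sym[of ?a v] by simp
qed

lemma B_weyl: "w \<in> weyl S M \<Longrightarrow> B (w u) (w v) = B u v"
  by (induction w rule: weyl.induct) (auto simp: B_refl)

lemma weyl_span_simple_roots:
  "w \<in> weyl S M \<Longrightarrow> u \<in> span (simple_root ` S) \<Longrightarrow> w u \<in> span (simple_root ` S)"
proof (induction w arbitrary: u rule: weyl.induct)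
  case (weyl_step w s)
  then show ?case unfolding comp_apply refl_eq by (intro span_diff span_scale) (auto intro: span_base)
qed simp

lemma roots_in_span: "\<beta> \<in> roots S M \<Longrightarrow> \<beta> \<in> span (simple_root ` S)"
  unfolding roots_def by (auto intro: weyl_span_simple_roots span_base)

lemma B_root_self: "\<beta> \<in> roots S M \<Longrightarrow> B \<beta> \<beta> = 2"
  unfolding roots_def by (auto simp: B_weyl B_simple_root_self)

text \<open>An isotropic vector of a positive semidefinite form lies in its radical: otherwise
  x + t y would have negative square for t = - B x y / (B y y + 1).\<close>
lemma B_isotropic: assumes "B x x \<le> 0" shows "B x y = 0"
proof (rule ccontr)
  assume ne: "B x y \<noteq> 0"
  define b c where "b = B x y" and "c = B y y"
  have c0: "c \<ge> 0" using psd c_def by simp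
  define t where "t = - b / (c + 1)"
  have xx: "B x x = 0" using psd[of x] assms by simp
  have "B (x + t *\<^sub>R y) (x + t *\<^sub>R y) = 2 * t * b + t * t * c"
    by (simp add: bform_add_left bform_add_right bform_scaleR_left bform_scaleR_right xx
        b_def c_def B_sym[of y x] algebra_simps)
  also have "\<dots> < 0"
  proof -
    have c1: "c + 1 > 0" using c0 by simp
    have tc: "t * (c + 1) = - b" using c1 by (simp add: t_def)
    have "(c + 1) * (c + 1) * (2 * t * b + t * t * c) =
        2 * (t * (c + 1)) * b * (c + 1) + (t * (c + 1)) * (t * (c + 1)) * c"
      by (simp add: algebra_simps)
    also have "\<dots> = - (b * b) * (c + 2)" unfolding tc by (simp add: algebra_simps)
    also have "\<dots> < 0"
    proof -
      have "b * b > 0" using ne b_def not_real_square_gt_zero by metis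
      then show ?thesis using c0 by (simp add: mult_pos_pos)
    qed
    finally have "(c + 1) * (c + 1) * (2 * t * b + t * t * c) < 0" .
    then show ?thesis using c1 by (simp add: mult_less_0_iff)
  qed
  finally show False using psd[of "x + t *\<^sub>R y"] by simp
qed

lemma hatM_finite_E:
  assumes "\<beta> \<noteq> \<gamma>" "hatM S M \<beta> \<gamma> \<noteq> \<infinity>"
  obtains w s t where "w \<in> weyl S M" "s \<in> S" "t \<in> S" "\<beta> = w (simple_root s)"
    "\<gamma> = w (simple_root t)" "M s t \<noteq> \<infinity>" "hatM S M \<beta> \<gamma> = M s t"
proof -
  define P where "P = (\<lambda>p. \<exists>w. w \<in> weyl S M \<and> fst p \<in> S \<and> snd p \<in> S \<and>
                      \<beta> = w (simple_root (fst p)) \<and> \<gamma> = w (simple_root (snd p)) \<and>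
                      M (fst p) (snd p) \<noteq> \<infinity>)"
  have ex: "\<exists>w s t. w \<in> weyl S M \<and> s \<in> S \<and> t \<in> S \<and> \<beta> = w (simple_root s) \<and>
      \<gamma> = w (simple_root t) \<and> M s t \<noteq> \<infinity>"
  proof (rule ccontr)
    assume nex: "\<not> ?thesis"
    have "hatM S M \<beta> \<gamma> = \<infinity>"
      unfolding hatM_def by (simp only: if_not_P[OF nex] if_not_P[OF assms(1)])
    then show False using assms(2) by simp
  qed
  then have "\<exists>p. P p" unfolding P_def by force
  then have "P (SOME p. P p)" by (rule someI_ex)
  moreover have "hatM S M \<beta> \<gamma> = M (fst (SOME p. P p)) (snd (SOME p. P p))"
    using assms(1) ex unfolding hatM_def P_def Let_def by simp
  ultimately show ?thesis using that unfolding P_def by blast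
qed

lemma bf_coeff_hatM:
  assumes "\<beta> \<in> roots S M" "\<gamma> \<in> roots S M" "hatM S M \<beta> \<gamma> \<noteq> \<infinity>"
  shows "bf_coeff (hatM S M) \<beta> \<gamma> = B \<beta> \<gamma>"
proof (cases "\<beta> = \<gamma>")
  case True
  then show ?thesis using B_root_self[OF assms(1)] by (simp add: hatM_def bf_coeff_def one_enat_def)
next
  case False
  then obtain w s t where "w \<in> weyl S M" "s \<in> S" "t \<in> S" "\<beta> = w (simple_root s)"
    "\<gamma> = w (simple_root t)" "hatM S M \<beta> \<gamma> = M s t"
    using assms(3) by (rule hatM_finite_E)
  then show ?thesis by (simp add: bf_coeff_def B_weyl bform_simple_root_simple_root finite_S)
qed

lemma B_roots_nonpos:
  assumes "hatM S M \<beta> \<gamma> \<noteq> \<infinity>" "\<beta> \<noteq> \<gamma>"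
  shows "B \<beta> \<gamma> \<le> 0"
proof -
  obtain w s t where d: "w \<in> weyl S M" "s \<in> S" "t \<in> S" "\<beta> = w (simple_root s)"
    "\<gamma> = w (simple_root t)" "M s t \<noteq> \<infinity>"
    using assms(2,1) by (rule hatM_finite_E)
  obtain n where n: "M s t = enat n" using d(6) by (cases "M s t") auto
  have "s \<noteq> t" using d assms(2) by blast
  then have "M s t \<ge> 2" using coxeter d(2,3) unfolding coxeter_matrix_def by blast
  then have n2: "real n \<ge> 2" using n by (simp add: numeral_eq_enat)
  then have "pi * 2 \<le> pi * real n" by (intro mult_left_mono) auto
  then have "pi / real n \<le> pi / 2" using n2 by (simp add: divide_le_eq)
  moreover have "0 \<le> pi / real n" by simp
  ultimately have "cos (pi / real n) \<ge> 0" using pi_gt_zero by (intro cos_ge_zero) linarith+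
  then show ?thesis using d n by (simp add: bf_coeff_def B_weyl bform_simple_root_simple_root finite_S)
qed

lemma B_gram_hatM:
  assumes "Y \<subseteq> roots S M" "\<forall>\<beta>\<in>Y. \<forall>\<gamma>\<in>Y. hatM S M \<beta> \<gamma> \<noteq> \<infinity>"
  shows "bform Y (hatM S M) x x = B (\<Sum>\<beta>\<in>Y. x \<beta> *\<^sub>R \<beta>) (\<Sum>\<beta>\<in>Y. x \<beta> *\<^sub>R \<beta>)"
proof -
  have "B (\<Sum>\<beta>\<in>Y. x \<beta> *\<^sub>R \<beta>) (\<Sum>\<beta>\<in>Y. x \<beta> *\<^sub>R \<beta>) = (\<Sum>\<beta>\<in>Y. x \<beta> * (\<Sum>\<gamma>\<in>Y. x \<gamma> * B \<beta> \<gamma>))"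
    by (simp add: bform_sum_left bform_sum_right B_sym)
  also have "\<dots> = (\<Sum>\<beta>\<in>Y. \<Sum>\<gamma>\<in>Y. x \<beta> * x \<gamma> * bf_coeff (hatM S M) \<beta> \<gamma>)"
    using assms by (auto simp: sum_distrib_left bf_coeff_hatM mult_ac subset_iff intro!: sum.cong)
  finally show ?thesis by (simp add: bform_def)
qed

lemma obtuse_relation_coeffs_nonpos:
  assumes obtuse: "\<And>p q. p \<in> C \<Longrightarrow> q \<in> C \<Longrightarrow> p \<noteq> q \<Longrightarrow> B p q \<le> 0"
    and half: "\<And>p. p \<in> C \<Longrightarrow> B p a > 0"
    and Z: "finite Z" "Z \<subseteq> C" and rel: "(\<Sum>v\<in>Z. u v *\<^sub>R v) = 0"
  shows "\<forall>v\<in>Z. u v \<le> 0"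
proof (rule ccontr)
  assume "\<not> (\<forall>v\<in>Z. u v \<le> 0)"
  define P where "P = {v\<in>Z. u v > 0}"
  define N where "N = Z - P"
  have P: "finite P" "P \<noteq> {}" "P \<subseteq> C" using Z \<open>\<not> _\<close> by (auto simp: P_def)
  define w where "w = (\<Sum>v\<in>P. u v *\<^sub>R v)"
  have "(\<Sum>v\<in>Z. u v *\<^sub>R v) = w + (\<Sum>v\<in>N. u v *\<^sub>R v)"
    unfolding w_def N_def using Z by (simp add: sum.subset_diff[of P Z] P_def)
  then have wN: "w = (\<Sum>v\<in>N. (- u v) *\<^sub>R v)" using rel by (simp add: sum_negf eq_neg_iff_add_eq_0)
  have "B w w = (\<Sum>q\<in>N. (- u q) * B w q)" by (subst (2) wN) (rule bform_sum_right)
  also have "\<dots> = (\<Sum>q\<in>N. (- u q) * (\<Sum>p\<in>P. u p * B p q))"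
    unfolding w_def by (simp add: bform_sum_left)
  also have "\<dots> \<le> 0"
  proof (rule sum_nonpos)
    fix q assume q: "q \<in> N"
    have "(\<Sum>p\<in>P. u p * B p q) \<le> 0"
    proof (rule sum_nonpos)
      fix p assume "p \<in> P"
      then show "u p * B p q \<le> 0"
        using q Z obtuse[of p q] by (auto simp: N_def P_def intro!: mult_nonneg_nonpos)
    qed
    moreover have "u q \<le> 0" using q by (auto simp: N_def P_def)
    ultimately show "(- u q) * (\<Sum>p\<in>P. u p * B p q) \<le> 0"
      by (intro mult_nonneg_nonpos) auto
  qed
  finally have "B w a = 0" by (rule B_isotropic)
  moreover have "B w a = (\<Sum>p\<in>P. u p * B p a)" by (simp add: w_def bform_sum_left)
  moreover have "(\<Sum>p\<in>P. u p * B p a) > 0"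
    using P half by (intro sum_pos) (auto simp: P_def)
  ultimately show False by simp
qed

lemma independent_if_obtuse_in_halfspace:
  assumes "\<And>p q. p \<in> C \<Longrightarrow> q \<in> C \<Longrightarrow> p \<noteq> q \<Longrightarrow> B p q \<le> 0"
    and "\<And>p. p \<in> C \<Longrightarrow> B p a > 0"
  shows "independent C"
  unfolding independent_explicit_finite_subsets
proof (intro allI impI ballI)
  fix Z u v assume Z: "Z \<subseteq> C" "finite Z" and rel: "(\<Sum>v\<in>Z. u v *\<^sub>R v) = 0" and "v \<in> Z"
  have nonpos: "\<forall>v\<in>Z. u' v \<le> 0" if "(\<Sum>v\<in>Z. u' v *\<^sub>R v) = 0" for u'
    by (rule obtuse_relation_coeffs_nonpos[of C a Z u']) (use assms Z that in auto)
  have "(\<Sum>v\<in>Z. (- u v) *\<^sub>R v) = 0" using rel by (simp add: sum_negf)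
  then show "u v = 0"
    using nonpos[OF rel] nonpos[of "\<lambda>v. - u v"] \<open>v \<in> Z\<close> by force
qed

lemma finite_roots_if_hatM_finite:
  assumes X: "X \<subseteq> roots S M" and fin: "\<forall>\<beta>\<in>X. \<forall>\<gamma>\<in>X. hatM S M \<beta> \<gamma> \<noteq> \<infinity>"
  shows "finite X"
proof -
  define C where "C a = {\<beta>\<in>X. B \<beta> a > 0}" for a
  have "X \<subseteq> (\<Union>s\<in>S. C (simple_root s) \<union> C (- simple_root s))"
  proof
    fix \<beta> assume \<beta>: "\<beta> \<in> X"
    have "\<exists>s\<in>S. B \<beta> (simple_root s) \<noteq> 0"
    proof (rule ccontr)
      assume "\<not> ?thesis"
      moreover have "\<beta> \<in> span (simple_root ` S)" using \<beta> X roots_in_span by blast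
      ultimately have "B \<beta> \<beta> = 0"
        using linear_eq_0_on_span[OF linear_bform_right[of S M \<beta>]] by blast
      then show False using B_root_self \<beta> X by auto
    qed
    then obtain s where s: "s \<in> S" "B \<beta> (simple_root s) \<noteq> 0" by blast
    then have "\<beta> \<in> C (simple_root s) \<union> C (- simple_root s)"
      using \<beta> by (auto simp: C_def bform_uminus_right)
    then show "\<beta> \<in> (\<Union>s\<in>S. C (simple_root s) \<union> C (- simple_root s))" using s(1) by blast
  qed
  moreover have "finite (C a)" for a
  proof -
    have "independent (C a)"
    proof (rule independent_if_obtuse_in_halfspace[where a = a])
      show "B p q \<le> 0" if "p \<in> C a" "q \<in> C a" "p \<noteq> q" for p q
        using that fin by (intro B_roots_nonpos) (auto simp: C_def)
    qed (simp add: C_def)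
    moreover have "C a \<subseteq> span (simple_root ` S)" using X roots_in_span by (auto simp: C_def)
    ultimately show ?thesis using independent_span_bound finite_S by blast
  qed
  then have "finite (\<Union>s\<in>S. C (simple_root s) \<union> C (- simple_root s))" using finite_S by simp
  ultimately show ?thesis by (rule finite_subset)
qed

definition radical :: "('a \<Rightarrow> real) set" where
  "radical = {r. \<forall>v. B r v = 0}"

text \<open>A non-spherical extension of T carries a nonzero vector of nonpositive square, which is
  in the radical; its coefficient at the new vertex is nonzero because T is spherical.\<close>
lemma simple_root_in_span_radical:
  assumes T: "maximal_spherical S M T" and s: "s \<in> S"
  shows "simple_root s \<in> span (simple_root ` T \<union> radical)"
proof (cases "s \<in> T")
  case True then show ?thesis by (intro span_base) auto
next
  case False
  have TS: "T \<subseteq> S" and sph: "spherical_type T M" and fT: "finite T"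
    using T finite_S finite_subset unfolding maximal_spherical_def by blast+
  have "\<not> spherical_type (insert s T) M" using T s False unfolding maximal_spherical_def by blast
  then obtain x where x: "\<exists>q\<in>insert s T. x q \<noteq> 0" "\<not> bform (insert s T) M x x > 0"
    using fT unfolding spherical_type_def by auto
  define x' where "x' q = (if q \<in> insert s T then x q else 0)" for q
  have "B x' x' = bform (insert s T) M x x"
    unfolding x'_def using TS s finite_S by (intro bform_restrict) auto
  then have "x' \<in> radical" using x(2) B_isotropic unfolding radical_def by force
  have "x s \<noteq> 0"
  proof
    assume "x s = 0"
    then have "x' = (\<lambda>q. if q \<in> T then x q else 0)" by (auto simp: x'_def)
    then have "B x' x' = bform T M x x" using TS finite_S by (simp add: bform_restrict)
    moreover have "\<exists>q\<in>T. x q \<noteq> 0" using x(1) \<open>x s = 0\<close> by auto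
    ultimately show False using sph \<open>x' \<in> radical\<close> unfolding spherical_type_def radical_def by auto
  qed
  define y where "y = (\<Sum>t\<in>T. x t *\<^sub>R simple_root t)"
  have "x' = x s *\<^sub>R simple_root s + y"
    using False fT by (auto simp: fun_eq_iff x'_def y_def sum_fun_apply simple_root_def
        if_distrib cong: if_cong)
  then have "simple_root s = (1 / x s) *\<^sub>R (x' - y)" using \<open>x s \<noteq> 0\<close> by (simp add: algebra_simps)
  moreover have "x' - y \<in> span (simple_root ` T \<union> radical)"
    unfolding y_def using \<open>x' \<in> radical\<close> by (intro span_diff span_sum span_scale span_base) auto
  ultimately show ?thesis by (metis span_scale)
qed

lemma isotropic_if_orthogonal_maximal_spherical:
  assumes T: "maximal_spherical S M T"
    and z: "z \<in> span (simple_root ` S)" and orth: "\<forall>t\<in>T. B z (simple_root t) = 0"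
  shows "B z z = 0"
proof -
  have "span (simple_root ` S) \<subseteq> span (simple_root ` T \<union> radical)"
    using simple_root_in_span_radical[OF T] by (intro span_minimal) (auto intro: subspace_span)
  then have "z \<in> span (simple_root ` T \<union> radical)" using z by blast
  moreover have "B z a = 0" if "a \<in> simple_root ` T \<union> radical" for a
    using that orth B_sym unfolding radical_def by auto
  ultimately show ?thesis using linear_eq_0_on_span[OF linear_bform_right] by blast
qed

lemma card_spherical_le_nsph:
  assumes X: "X \<subseteq> roots S M" and fin: "\<forall>\<beta>\<in>X. \<forall>\<gamma>\<in>X. hatM S M \<beta> \<gamma> \<noteq> \<infinity>"
    and Y: "Y \<subseteq> X" "spherical_type Y (hatM S M)"
  shows "card Y \<le> nsph S M"
proof -
  obtain T where T: "maximal_spherical S M T" "card T = nsph S M"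
    using nsph_attained[OF finite_S] by blast
  have fT: "finite T" using T(1) finite_S finite_subset unfolding maximal_spherical_def by blast
  have fY: "finite Y" using Y unfolding spherical_type_def by blast
  define f where "f v q = (if q \<in> T then B v (simple_root q) else 0)" for v q
  have "card Y \<le> card (simple_root ` T)"
  proof (rule card_le_if_family_independent[of Y _ f])
    show "f ` Y \<subseteq> span (simple_root ` T)"
      using fT by (auto simp: f_def intro!: in_span_simple_roots)
  next
    fix c assume rel: "(\<Sum>y\<in>Y. c y *\<^sub>R f y) = 0"
    define z where "z = (\<Sum>y\<in>Y. c y *\<^sub>R y)"
    have "B z (simple_root t) = (\<Sum>y\<in>Y. c y *\<^sub>R f y) t" if "t \<in> T" for t
      using that by (simp add: z_def bform_sum_left sum_fun_apply f_def)
    then have "\<forall>t\<in>T. B z (simple_root t) = 0" using rel by simp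
    moreover have "z \<in> span (simple_root ` S)"
      unfolding z_def using Y X roots_in_span by (intro span_sum span_scale) auto
    ultimately have "B z z = 0" using isotropic_if_orthogonal_maximal_spherical[OF T(1)] by blast
    moreover have "bform Y (hatM S M) c c = B z z"
      unfolding z_def using Y X fin by (intro B_gram_hatM) blast+
    ultimately show "\<forall>y\<in>Y. c y = 0" using Y(2) unfolding spherical_type_def by force
  qed (use fY fT in auto)
  also have "\<dots> \<le> card T" by (rule card_image_le[OF fT])
  finally show ?thesis using T(2) by simp
qed

end

theorem theorem4p1:
  fixes S :: "'a set" and M :: "'a \<Rightarrow> 'a \<Rightarrow> enat" and X :: "('a \<Rightarrow> real) set"
  assumes "coxeter_matrix S M"
    and "countable S"
    and "spherical_type S M \<or> affine_type S M"
    and "X \<subseteq> roots S M"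
    and "\<forall>\<beta>\<in>X. \<forall>\<gamma>\<in>X. hatM S M \<beta> \<gamma> \<noteq> \<infinity>"
  shows "finite X \<and>
         (spherical_type X (hatM S M) \<or> affine_type X (hatM S M)) \<and>
         nsph X (hatM S M) \<le> nsph S M"
proof -
  have "finite S" using assms(3) unfolding spherical_type_def affine_type_def by blast
  then interpret psd_coxeter_graph S M
    using assms(1,3) bform_nonneg_if_spherical_or_affine by unfold_locales auto
  have fX: "finite X" using finite_roots_if_hatM_finite assms(4,5) by blast
  moreover have "spherical_type X (hatM S M) \<or> affine_type X (hatM S M)"
    using fX B_gram_hatM[OF assms(4,5)] psd by (intro spherical_or_affine_if_bform_nonneg) auto
  moreover have "nsph X (hatM S M) \<le> nsph S M"
    using fX card_spherical_le_nsph[OF assms(4,5)] by (intro nsph_le) auto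
  ultimately show ?thesis by blast
qed

end
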